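(* Let $P=\{p_1,\dots,p_n\}$ be a set of $n$ distinct points in the plane and, for $\varepsilon>0$, let $f$ be the stacking order of $\mathcal{D}(\varepsilon P)$ given by $f(D(\varepsilon p_i))=i$ for $i=1,\dots,n$. Then $$\lim_{\varepsilon\to 0}\mathrm{vis}(\mathcal{D}(\varepsilon P),f)=\sum_{i=1}^n \tau_i,$$ where $\tau_1=2\pi$, and for $i\ge 2$: $\tau_i=0$ if $p_i\in\mathrm{conv}\{p_1,\dots,p_{i-1}\}$, and otherwise $\tau_i$ is the external angle of the convex set $\mathrm{conv}\{p_1,\dots,p_i\}$ at its vertex $p_i$.
   Context: For a point $p$ in the plane, $D(p)$ denotes the closed disk of radius $1$ centered at $p$, and for a finite point set $Q$, $\mathcal{D}(Q)=\{D(q): q\in Q\}$; $\varepsilon P=\{\varepsilon p: p\in P\}$ where $\varepsilon(x,y)=(\varepsilon x,\varepsilon y)$. A stacking order of a finite collection $\mathcal{D}$ of $n$ distinct unit disks is a bijection $f:\mathcal{D}\to\{1,\dots,n\}$; $f(D)$ is regarded as the height of $D$, and the arrangement is viewed from below. A point $x$ on the boundary circle of $D\in\mathcal{D}$ is visible if $x$ does not lie in any disk $D'\in\mathcal{D}$ with $f(D')<f(D)$. The visible perimeter $\mathrm{vis}(\mathcal{D},f)$ is the total length of all visible boundary points, summed over all disks. The external angle at a vertex $p_i$ is $\pi$ minus the interior angle at $p_i$; equivalently, it is the angle between the outward unit normals of the two sides meeting at $p_i$. If $\mathrm{conv}\{p_1,\dots,p_i\}$ is a segment with endpoint $p_i$,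 the external angle at $p_i$ is $\pi$. *)

theory Defs
  imports "HOL-Analysis.Analysis"
begin

definition unit_disk :: "complex \<Rightarrow> complex set" where
  "unit_disk p = cball p 1"

text \<open>A collection of distinct unit disks is identified with the finite set Q of their centres;
  a stacking order is a bijection f from Q onto 1..card Q (f q is the height of the disk D(q)).
  The boundary circle of D(q) is parametrised by arc length t in [0, 2 pi) as q + cis t,
  so the length of the visible part is the Lebesgue measure of the set of visible parameters.\<close>

definition visible_param :: "complex set \<Rightarrow> (complex \<Rightarrow> nat) \<Rightarrow> complex \<Rightarrow> real set" where
  "visible_param Q f q = {t \<in> {0..<2*pi}. \<forall>q'\<in>Q. f q' < f q \<longrightarrow> q + cis t \<notin> unit_disk q'}"

definition vis :: "complex set \<Rightarrow> (complex \<Rightarrow> nat) \<Rightarrow> real" where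
  "vis Q f = (\<Sum>q\<in>Q. measure lborel (visible_param Q f q))"

definition scale_set :: "real \<Rightarrow> complex set \<Rightarrow> complex set" where
  "scale_set \<epsilon> P = (\<lambda>p. \<epsilon> *\<^sub>R p) ` P"

definition vec_angle :: "complex \<Rightarrow> complex \<Rightarrow> real" where
  "vec_angle u w = arccos ((u \<bullet> w) / (norm u * norm w))"

text \<open>Interior angle of a convex set K at a point v of K: the largest angle subtended at v by
  two points of K (for a convex polygon this is the angle between the two sides at the vertex v;
  for a segment with endpoint v it is 0).\<close>
definition interior_angle :: "complex set \<Rightarrow> complex \<Rightarrow> real" where
  "interior_angle K v = Sup {vec_angle (u - v) (w - v) | u w. u \<in> K \<and> w \<in> K \<and> u \<noteq> v \<and> w \<noteq> v}"

definition external_angle :: "complex set \<Rightarrow> complex \<Rightarrow> real" where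
  "external_angle K v = pi - interior_angle K v"

definition tau :: "(nat \<Rightarrow> complex) \<Rightarrow> nat \<Rightarrow> real" where
  "tau p i = (if i = 1 then 2 * pi
              else if p i \<in> convex hull (p ` {1..<i}) then 0
              else external_angle (convex hull (p ` {1..i})) (p i))"

end

theory Submission
  imports Defs
begin

text \<open>For \<open>\<epsilon> > 0\<close> the boundary point \<open>\<epsilon> p\<^sub>i + e\<^sup>i\<^sup>t\<close> of the i-th disk avoids
  the disk centred at \<open>\<epsilon> p\<^sub>j\<close> exactly when
  \<open>(p\<^sub>j - p\<^sub>i) \<bullet> e\<^sup>i\<^sup>t < \<epsilon> |p\<^sub>j - p\<^sub>i|\<^sup>2 / 2\<close>.
  As \<open>\<epsilon> \<rightarrow> 0\<close> these sets of directions decrease to the arc of directions lying in the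
  polar cone of the vectors \<open>p\<^sub>j - p\<^sub>i\<close>, \<open>j < i\<close>, so by continuity of measure the
  visible perimeter tends to the sum of the lengths of these arcs. The arc is the whole circle
  for \<open>i = 1\<close> and a null set when \<open>p\<^sub>i\<close> lies in the hull of the earlier points (a
  positive combination of the \<open>p\<^sub>j - p\<^sub>i\<close> vanishes). Otherwise a separating line lets
  us rotate all \<open>p\<^sub>j - p\<^sub>i\<close> into the open right half-plane; there the arc is
  \<open>[max arg + \<pi>/2, min arg + 3\<pi>/2]\<close>, of length \<open>\<pi>\<close> minus the spread
  \<open>max arg - min arg\<close> of the arguments, and this spread is the interior angle of the hull at
  \<open>p\<^sub>i\<close> because the hull stays in the sector spanned by the extreme directions.\<close>

definition polar_cone :: "complex set \<Rightarrow> complex set" where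
  "polar_cone W = {z. \<forall>w\<in>W. w \<bullet> z \<le> 0}"

definition polar_arc :: "complex set \<Rightarrow> real set" where
  "polar_arc W = {t \<in> {0..<2*pi}. cis t \<in> polar_cone W}"

definition relaxed_polar_arc :: "real \<Rightarrow> (complex \<Rightarrow> real) \<Rightarrow> complex set \<Rightarrow> real set" where
  "relaxed_polar_arc \<epsilon> c W = {t \<in> {0..<2*pi}. \<forall>w\<in>W. w \<bullet> cis t < \<epsilon> * c w}"

lemma closed_polar_cone: "closed (polar_cone W)"
  unfolding polar_cone_def Collect_ball_eq
  by (intro closed_INT ballI closed_halfspace_le)

lemma borel_measurable_cis [measurable]:
  assumes "f \<in> borel_measurable M"
  shows "(\<lambda>x. cis (f x)) \<in> borel_measurable M"
proof -
  have "cis \<in> borel_measurable borel"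
    by (intro borel_measurable_continuous_onI continuous_intros)
  then show ?thesis
    by (rule measurable_compose[OF assms])
qed

lemma polar_arc_borel [measurable]: "polar_arc W \<in> sets borel"
proof -
  have "polar_cone W \<in> sets borel"
    using closed_polar_cone by (rule borel_closed)
  then show ?thesis
    unfolding polar_arc_def by measurable
qed

lemma norm_mult_cos_Arg: "norm z * cos (Arg z) = Re z"
  by (metis Re_rcis rcis_cmod_Arg)

lemma norm_mult_sin_Arg: "norm z * sin (Arg z) = Im z"
  by (metis Im_rcis rcis_cmod_Arg)

lemma inner_eq_cos_Arg_diff: "u \<bullet> w = norm u * norm w * cos (Arg u - Arg w)"
  by (simp add: inner_complex_def cos_diff algebra_simps
      flip: norm_mult_cos_Arg[of u] norm_mult_cos_Arg[of w]
        norm_mult_sin_Arg[of u] norm_mult_sin_Arg[of w])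

lemma inner_cis_eq_cos_Arg: "w \<bullet> cis t = norm w * cos (t - Arg w)"
  by (simp add: inner_complex_def cos_diff algebra_simps
      flip: norm_mult_cos_Arg[of w] norm_mult_sin_Arg[of w])

lemma inner_mult_cis: "(a * w) \<bullet> cis t = norm a * (w \<bullet> cis (t - Arg a))"
  by (subst (1) rcis_cmod_Arg[of a, symmetric])
     (simp add: rcis_def inner_complex_def cos_diff sin_diff algebra_simps)

lemma null_sets_inner_cis_eq_0:
  assumes "w \<noteq> 0"
  shows "{t. w \<bullet> cis t = 0} \<in> null_sets lborel"
proof (rule null_sets_subset[OF countable_imp_null_set_lborel])
  show "{t. w \<bullet> cis t = 0} \<subseteq> range (\<lambda>i::int. Arg w + of_int i * (pi/2))"
  proof
    fix t assume "t \<in> {t. w \<bullet> cis t = 0}"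
    then have "cos (t - Arg w) = 0"
      using assms by (simp add: inner_cis_eq_cos_Arg)
    then obtain i where "t - Arg w = of_int i * (pi/2)"
      using cos_zero_iff_int by blast
    then show "t \<in> range (\<lambda>i::int. Arg w + of_int i * (pi/2))"
      by (intro image_eqI[of _ _ i]) auto
  qed
qed auto

lemma vec_angle_mult_left:
  assumes "a \<noteq> 0"
  shows "vec_angle (a * u) (a * w) = vec_angle u w"
proof -
  have "(a * u) \<bullet> (a * w) = (norm a)\<^sup>2 * (u \<bullet> w)"
    unfolding cmod_power2 by (simp add: inner_complex_def power2_eq_square algebra_simps)
  then show ?thesis
    using assms by (simp add: vec_angle_def norm_mult power2_eq_square)
qed

lemma vec_angle_eq_Arg:
  assumes "u \<noteq> 0" "w \<noteq> 0"
  shows "vec_angle u w = arccos (cos (Arg u - Arg w))"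
  using assms by (simp add: vec_angle_def inner_eq_cos_Arg_diff)

lemma cos_le_zero_iff:
  assumes "-(pi/2) < x" "x < 5*pi/2"
  shows "cos x \<le> 0 \<longleftrightarrow> pi/2 \<le> x \<and> x \<le> 3*pi/2"
proof
  assume cos: "cos x \<le> 0"
  have "\<not> x < pi/2"
    using cos_gt_zero_pi[of x] assms cos by linarith
  moreover have "\<not> 3*pi/2 < x"
  proof
    assume "3*pi/2 < x"
    then have "0 < cos (x - 2*pi)"
      using assms by (intro cos_gt_zero_pi) auto
    then show False
      using cos by (simp add: cos_diff)
  qed
  ultimately show "pi/2 \<le> x \<and> x \<le> 3*pi/2"
    by linarith
next
  assume "pi/2 \<le> x \<and> x \<le> 3*pi/2"
  then have "0 \<le> cos (x - pi)"
    by (intro cos_ge_zero) auto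
  then show "cos x \<le> 0"
    by (simp add: cos_diff)
qed

lemma arccos_cos_abs:
  assumes "\<bar>x\<bar> \<le> pi"
  shows "arccos (cos x) = \<bar>x\<bar>"
  using assms arccos_cos[of x] arccos_cos[of "-x"] by (cases "0 \<le> x") auto

lemma borel_angles_rotated:
  assumes "A \<in> sets borel"
  shows "{t\<in>{0..<2*pi}. cis (t - c) \<in> A} \<in> sets borel"
proof -
  have "(\<lambda>t. cis (t - c)) -` A \<in> sets borel"
    by (rule measurable_sets_borel[OF _ assms]) measurable
  then show ?thesis
    by (simp add: vimage_def Collect_conj_eq)
qed

lemma lmeasurable_angles:
  assumes "A \<in> sets borel"
  shows "{s\<in>{a..<b}. cis s \<in> A} \<in> lmeasurable"
proof (rule bounded_set_imp_lmeasurable)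
  show "bounded {s\<in>{a..<b}. cis s \<in> A}"
    by (rule bounded_subset[of "{a..b}"]) auto
  have "{s\<in>{a..<b}. cis s \<in> A} \<in> sets borel"
    using assms by measurable
  then show "{s\<in>{a..<b}. cis s \<in> A} \<in> sets lebesgue"
    by simp
qed

lemma angles_rotated_eq_Un_translates:
  assumes d: "0 \<le> d" "d \<le> 2*pi"
  shows "{t\<in>{0..<2*pi}. cis (t - d) \<in> A}
    = (+) d ` {s\<in>{0..<2*pi - d}. cis s \<in> A} \<union> (+) (d - 2*pi) ` {s\<in>{2*pi - d..<2*pi}. cis s \<in> A}"
    (is "?L = ?R1 \<union> ?R2")
proof -
  have cis_shift: "cis (s - 2*pi) = cis s" for s
    by (simp flip: cis_divide)
  have "t \<in> ?R1 \<union> ?R2" if t: "t \<in> ?L" for t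
  proof (cases "d \<le> t")
    case True
    then show ?thesis
      using t by (intro UnI1 image_eqI[of _ _ "t - d"]) auto
  next
    case False
    then show ?thesis
      using t cis_shift[of "t - d + 2*pi"] by (intro UnI2 image_eqI[of _ _ "t - d + 2*pi"]) auto
  qed
  moreover have "?R1 \<subseteq> ?L"
    using d by auto
  moreover have "?R2 \<subseteq> ?L"
  proof
    fix t assume "t \<in> ?R2"
    then obtain s where s: "s \<in> {2*pi - d..<2*pi}" "cis s \<in> A" and t: "t = d - 2*pi + s"
      by blast
    have "t - d = s - 2*pi"
      using t by simp
    then have "cis (t - d) = cis s"
      using cis_shift[of s] by simp
    then show "t \<in> ?L"
      using d s t by simp
  qed
  ultimately show ?thesis
    by blast
qed

lemma measure_Un_disjoint_lebesgue:
  assumes "X \<in> lmeasurable" "Y \<in> lmeasurable" "X \<inter> Y = {}"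
  shows "measure lebesgue (X \<union> Y) = measure lebesgue X + measure lebesgue Y"
  using measure_Un3[OF assms(1,2)] assms(3) by simp

lemma measure_angles_shift:
  assumes A: "A \<in> sets borel" and d: "0 \<le> d" "d \<le> 2*pi"
  shows "measure lborel {t\<in>{0..<2*pi}. cis (t - d) \<in> A} = measure lborel {t\<in>{0..<2*pi}. cis t \<in> A}"
proof -
  define B where "B a b = {s\<in>{a..<b}. cis s \<in> A}" for a b
  have B: "B a b \<in> lmeasurable" for a b
    unfolding B_def using A by (rule lmeasurable_angles)
  have "(+) d ` B 0 (2*pi - d) \<subseteq> {d..}" "(+) (d - 2*pi) ` B (2*pi - d) (2*pi) \<subseteq> {..<d}"
    by (auto simp: B_def)
  then have disjoint: "(+) d ` B 0 (2*pi - d) \<inter> (+) (d - 2*pi) ` B (2*pi - d) (2*pi) = {}"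
    by fastforce
  have lborel_eq_lebesgue: "measure lborel X = measure lebesgue X"
    if "X \<in> sets borel" for X :: "real set"
    using that by simp
  have "measure lborel {t\<in>{0..<2*pi}. cis (t - d) \<in> A}
      = measure lebesgue ((+) d ` B 0 (2*pi - d) \<union> (+) (d - 2*pi) ` B (2*pi - d) (2*pi))"
    unfolding B_def angles_rotated_eq_Un_translates[OF d, symmetric]
    by (rule lborel_eq_lebesgue[OF borel_angles_rotated[OF A]])
  also have "\<dots> = measure lebesgue (B 0 (2*pi - d)) + measure lebesgue (B (2*pi - d) (2*pi))"
    using measure_Un_disjoint_lebesgue[OF measurable_translation measurable_translation disjoint]
    by (simp add: B measure_translation)
  also have "\<dots> = measure lebesgue (B 0 (2*pi - d) \<union> B (2*pi - d) (2*pi))"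
    by (rule measure_Un_disjoint_lebesgue[symmetric, OF B B]) (auto simp: B_def)
  also have "B 0 (2*pi - d) \<union> B (2*pi - d) (2*pi) = {t\<in>{0..<2*pi}. cis t \<in> A}"
    using d by (auto simp: B_def)
  also have "measure lebesgue \<dots> = measure lborel {t\<in>{0..<2*pi}. cis t \<in> A}"
    using borel_angles_rotated[OF A, of 0] by (intro lborel_eq_lebesgue[symmetric]) simp
  finally show ?thesis .
qed

lemma measure_angles_rotate:
  assumes "A \<in> sets borel"
  shows "measure lborel {t\<in>{0..<2*pi}. cis (t - d) \<in> A} = measure lborel {t\<in>{0..<2*pi}. cis t \<in> A}"
proof -
  define d' where "d' = Arg2pi (cis d)"
  have d': "0 \<le> d'" "d' < 2*pi" "cis d' = cis d"
    using Arg2pi[of "cis d"] by (auto simp: d'_def is_Arg_def cis_conv_exp)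
  have "cis (t - d) = cis (t - d')" for t
    using d'(3) by (simp flip: cis_divide)
  then show ?thesis
    using measure_angles_shift[OF assms, of d'] d' by simp
qed

lemma measure_polar_arc_mult:
  assumes "a \<noteq> 0"
  shows "measure lborel (polar_arc ((*) a ` W)) = measure lborel (polar_arc W)"
proof -
  have "polar_arc ((*) a ` W) = {t\<in>{0..<2*pi}. cis (t - Arg a) \<in> polar_cone W}"
    using assms by (auto simp: polar_arc_def polar_cone_def inner_mult_cis mult_le_0_iff)
  then show ?thesis
    using measure_angles_rotate[OF borel_closed[OF closed_polar_cone]] by (simp add: polar_arc_def)
qed

lemma Min_Max_Arg_right_half_plane:
  assumes W: "finite W" "W \<noteq> {}" and pos: "\<And>w. w \<in> W \<Longrightarrow> 0 < Re w"
  shows "- (pi/2) < Min (Arg ` W)" "Min (Arg ` W) \<le> Max (Arg ` W)" "Max (Arg ` W) < pi/2"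
proof -
  have Arg_bound: "- (pi/2) < Arg w \<and> Arg w < pi/2" if "w \<in> W" for w
    using Arg_Re_pos[of w] pos[OF that] by linarith
  show "- (pi/2) < Min (Arg ` W)"
    by (subst Min_gr_iff) (use W Arg_bound in auto)
  show "Max (Arg ` W) < pi/2"
    by (subst Max_less_iff) (use W Arg_bound in auto)
  obtain w where "w \<in> W"
    using W by blast
  then show "Min (Arg ` W) \<le> Max (Arg ` W)"
    using W by (meson Max_ge Min_le finite_imageI image_eqI order.trans)
qed

lemma measure_polar_arc_right_half_plane:
  assumes W: "finite W" "W \<noteq> {}" and pos: "\<And>w. w \<in> W \<Longrightarrow> 0 < Re w"
  shows "measure lborel (polar_arc W) = pi - (Max (Arg ` W) - Min (Arg ` W))"
proof -
  note bounds = Min_Max_Arg_right_half_plane[OF W pos]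
  have "w \<bullet> cis t \<le> 0 \<longleftrightarrow> Arg w \<le> t - pi/2 \<and> t - 3*pi/2 \<le> Arg w"
    if "w \<in> W" "t \<in> {0..<2*pi}" for w t
  proof -
    have "w \<noteq> 0"
      using pos[OF that(1)] by auto
    then have "w \<bullet> cis t \<le> 0 \<longleftrightarrow> cos (t - Arg w) \<le> 0"
      by (simp add: inner_cis_eq_cos_Arg mult_le_0_iff)
    also have "\<dots> \<longleftrightarrow> pi/2 \<le> t - Arg w \<and> t - Arg w \<le> 3*pi/2"
      using Arg_Re_pos[of w] pos[OF that(1)] that(2) by (intro cos_le_zero_iff) auto
    finally show ?thesis
      by linarith
  qed
  then have "polar_arc W = {t\<in>{0..<2*pi}. (\<forall>w\<in>W. Arg w \<le> t - pi/2) \<and> (\<forall>w\<in>W. t - 3*pi/2 \<le> Arg w)}"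
    by (auto simp: polar_arc_def polar_cone_def)
  also have "\<dots> = {t\<in>{0..<2*pi}. Max (Arg ` W) \<le> t - pi/2 \<and> t - 3*pi/2 \<le> Min (Arg ` W)}"
    using W by (simp add: Max_le_iff Min_ge_iff)
  also have "\<dots> = {Max (Arg ` W) + pi/2 .. Min (Arg ` W) + 3*pi/2}"
    using bounds by auto
  finally show ?thesis
    using bounds by simp
qed

lemma complex_cone_scaleR:
  assumes "z \<in> complex_cone a b" "0 \<le> u"
  shows "u *\<^sub>R z \<in> complex_cone a b"
  using assms by (auto simp: in_complex_cone_iff rcis_def scaleR_conv_of_real norm_mult)

lemma convex_complex_cone:
  assumes ab: "a \<in> {-pi<..pi}" "b \<in> {-pi<..pi}" "dist a b < pi"
  shows "convex (complex_cone a b)"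
  unfolding convex_contains_segment
proof (intro ballI subsetI)
  fix x y z assume x: "x \<in> complex_cone a b" and y: "y \<in> complex_cone a b"
    and z: "z \<in> closed_segment x y"
  consider "z = 0" | "x = 0" | "y = 0" | "x \<noteq> 0" "y \<noteq> 0" "z \<noteq> 0"
    by blast
  then show "z \<in> complex_cone a b"
  proof cases
    case 2
    then obtain u where "0 \<le> u" "z = u *\<^sub>R y"
      using z by (auto simp: closed_segment_def)
    then show ?thesis
      using complex_cone_scaleR[OF y] by simp
  next
    case 3
    then obtain u where "0 \<le> u" "z = (1 - u) *\<^sub>R x" "u \<le> 1"
      using z by (auto simp: closed_segment_def)
    then show ?thesis
      using complex_cone_scaleR[OF x] by simp
  next
    case 4
    have Args: "Arg x \<in> closed_segment a b" "Arg y \<in> closed_segment a b"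
      using x y 4 ab by (auto simp: in_complex_cone_iff_Arg)
    then have "dist (Arg x) (Arg y) < pi"
      using ab(3) by (auto simp: closed_segment_eq_real_ivl dist_real_def split: if_splits)
    then have "Arg z \<in> closed_segment (Arg x) (Arg y)"
      using 4 z by (intro Arg_closed_segment) auto
    also have "\<dots> \<subseteq> closed_segment a b"
      using Args by (intro closed_segment_subset) auto
    finally show ?thesis
      using ab by (auto simp: in_complex_cone_iff_Arg)
  qed auto
qed

lemma Arg_convex_hull_insert_0:
  assumes W: "finite W" "W \<noteq> {}" and pos: "\<And>w. w \<in> W \<Longrightarrow> 0 < Re w"
    and u: "u \<in> convex hull (insert 0 W)" "u \<noteq> 0"
  shows "Min (Arg ` W) \<le> Arg u \<and> Arg u \<le> Max (Arg ` W)"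
proof -
  define a b where "a = Min (Arg ` W)" and "b = Max (Arg ` W)"
  have ab: "-(pi/2) < a" "a \<le> b" "b < pi/2"
    using Min_Max_Arg_right_half_plane[OF W pos] by (auto simp: a_def b_def)
  have segment: "closed_segment a b = {a..b}"
    using ab by (simp add: closed_segment_eq_real_ivl)
  have "a \<le> Arg w \<and> Arg w \<le> b" if "w \<in> W" for w
    using W that by (auto simp: a_def b_def)
  then have "convex hull (insert 0 W) \<subseteq> complex_cone a b"
  proof (intro hull_minimal)
    show "insert 0 W \<subseteq> complex_cone a b" if "\<And>w. w \<in> W \<Longrightarrow> a \<le> Arg w \<and> Arg w \<le> b"
      using ab that by (auto simp: in_complex_cone_iff_Arg segment)
    show "convex (complex_cone a b)"
      using ab by (intro convex_complex_cone) (auto simp: dist_real_def)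
  qed
  then have "u \<in> complex_cone a b"
    using u(1) by blast
  then have "Arg u \<in> closed_segment a b"
    using u(2) ab by (subst (asm) in_complex_cone_iff_Arg) auto
  then show ?thesis
    unfolding segment by (simp add: a_def b_def)
qed

lemma interior_angle_hull_right_half_plane:
  assumes W: "finite W" "W \<noteq> {}" and pos: "\<And>w. w \<in> W \<Longrightarrow> 0 < Re w"
  shows "interior_angle (convex hull (insert 0 W)) 0 = Max (Arg ` W) - Min (Arg ` W)"
proof -
  define a b where "a = Min (Arg ` W)" and "b = Max (Arg ` W)"
  have ab: "-(pi/2) < a" "a \<le> b" "b < pi/2"
    using Min_Max_Arg_right_half_plane[OF W pos] by (auto simp: a_def b_def)
  have "a \<in> Arg ` W" "b \<in> Arg ` W"
    unfolding a_def b_def using W by (intro Min_in Max_in; simp)+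
  then obtain wa wb where wa: "wa \<in> W" "Arg wa = a" and wb: "wb \<in> W" "Arg wb = b"
    by blast
  have Arg_hull: "a \<le> Arg u \<and> Arg u \<le> b" if "u \<in> convex hull (insert 0 W)" "u \<noteq> 0" for u
    using Arg_convex_hull_insert_0[OF W pos that] by (simp add: a_def b_def)
  have "Sup {vec_angle (u - 0) (w - 0) | u w. u \<in> convex hull (insert 0 W)
      \<and> w \<in> convex hull (insert 0 W) \<and> u \<noteq> 0 \<and> w \<noteq> 0} = b - a"
  proof (rule cSup_eq_maximum)
    have "wa \<noteq> 0" "wb \<noteq> 0"
      using pos[OF wa(1)] pos[OF wb(1)] by auto
    moreover have "vec_angle wb wa = b - a"
      using ab by (simp add: vec_angle_eq_Arg \<open>wa \<noteq> 0\<close> \<open>wb \<noteq> 0\<close> wa(2) wb(2) arccos_cos)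
    moreover have "wa \<in> convex hull (insert 0 W)" "wb \<in> convex hull (insert 0 W)"
      using wa(1) wb(1) by (auto intro: hull_inc)
    ultimately show "b - a \<in> {vec_angle (u - 0) (w - 0) | u w. u \<in> convex hull (insert 0 W)
        \<and> w \<in> convex hull (insert 0 W) \<and> u \<noteq> 0 \<and> w \<noteq> 0}"
      by force
  next
    fix x assume "x \<in> {vec_angle (u - 0) (w - 0) | u w. u \<in> convex hull (insert 0 W)
        \<and> w \<in> convex hull (insert 0 W) \<and> u \<noteq> 0 \<and> w \<noteq> 0}"
    then obtain u w where u: "u \<in> convex hull (insert 0 W)" "u \<noteq> 0"
      and w: "w \<in> convex hull (insert 0 W)" "w \<noteq> 0" and x: "x = vec_angle u w"
      by auto
    have "\<bar>Arg u - Arg w\<bar> \<le> pi"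
      using Arg_hull[OF u] Arg_hull[OF w] ab by linarith
    then have "x = \<bar>Arg u - Arg w\<bar>"
      using u(2) w(2) by (simp add: x vec_angle_eq_Arg arccos_cos_abs)
    then show "x \<le> b - a"
      using Arg_hull[OF u] Arg_hull[OF w] by linarith
  qed
  then show ?thesis
    unfolding interior_angle_def a_def b_def by simp
qed

lemma interior_angle_affine_image:
  assumes "a \<noteq> 0"
  shows "interior_angle ((\<lambda>z. a * z + b) ` K) (a * v + b) = interior_angle K v"
proof -
  have angle: "vec_angle ((a * u + b) - (a * v + b)) ((a * w + b) - (a * v + b))
      = vec_angle (u - v) (w - v)" for u w
    using vec_angle_mult_left[OF assms, of "u - v" "w - v"] by (simp add: algebra_simps)
  have "{vec_angle (u' - (a * v + b)) (w' - (a * v + b)) | u' w'. u' \<in> (\<lambda>z. a * z + b) ` K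
        \<and> w' \<in> (\<lambda>z. a * z + b) ` K \<and> u' \<noteq> a * v + b \<and> w' \<noteq> a * v + b}
      = {vec_angle (u - v) (w - v) | u w. u \<in> K \<and> w \<in> K \<and> u \<noteq> v \<and> w \<noteq> v}"
    (is "?L = ?R")
  proof (intro equalityI subsetI)
    fix x assume "x \<in> ?L"
    then obtain u w where "u \<in> K" "w \<in> K" "u \<noteq> v" "w \<noteq> v"
      and "x = vec_angle ((a * u + b) - (a * v + b)) ((a * w + b) - (a * v + b))"
      by blast
    then show "x \<in> ?R"
      unfolding angle by blast
  next
    fix x assume "x \<in> ?R"
    then obtain u w where "u \<in> K" "w \<in> K" "u \<noteq> v" "w \<noteq> v" "x = vec_angle (u - v) (w - v)"
      by blast
    moreover have "a * u + b \<noteq> a * v + b" "a * w + b \<noteq> a * v + b"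
      using assms \<open>u \<noteq> v\<close> \<open>w \<noteq> v\<close> by auto
    ultimately show "x \<in> ?L"
      unfolding angle[symmetric] by blast
  qed
  then show ?thesis
    unfolding interior_angle_def by simp
qed

lemma measure_polar_arc_zero_in_hull:
  assumes W: "finite W" "0 \<notin> W" and hull: "0 \<in> convex hull W"
  shows "measure lborel (polar_arc W) = 0"
proof -
  obtain \<mu> where \<mu>: "\<forall>w\<in>W. 0 \<le> \<mu> w" "sum \<mu> W = 1" "(\<Sum>w\<in>W. \<mu> w *\<^sub>R w) = 0"
    using hull convex_hull_finite[OF W(1)] by auto
  obtain w0 where w0: "w0 \<in> W" "0 < \<mu> w0"
    using \<mu>(1,2) by (metis less_eq_real_def sum_nonneg_eq_0_iff[OF W(1)] zero_neq_one)
  have "polar_arc W \<subseteq> {t. w0 \<bullet> cis t = 0}"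
  proof
    fix t assume "t \<in> polar_arc W"
    then have nonpos: "\<forall>w\<in>W. \<mu> w * (w \<bullet> cis t) \<le> 0"
      using \<mu>(1) by (auto simp: polar_arc_def polar_cone_def mult_nonneg_nonpos)
    have "(\<Sum>w\<in>W. \<mu> w * (w \<bullet> cis t)) = (\<Sum>w\<in>W. \<mu> w *\<^sub>R w) \<bullet> cis t"
      by (simp add: inner_sum_left)
    then have "(\<Sum>w\<in>W. - (\<mu> w * (w \<bullet> cis t))) = 0"
      using \<mu>(3) by (simp add: sum_negf)
    then have "\<mu> w0 * (w0 \<bullet> cis t) = 0"
      using nonpos w0(1) sum_nonneg_eq_0_iff[OF W(1), of "\<lambda>w. - (\<mu> w * (w \<bullet> cis t))"] by auto
    then show "t \<in> {t. w0 \<bullet> cis t = 0}"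
      using w0(2) by simp
  qed
  moreover have "w0 \<noteq> 0"
    using W(2) w0(1) by auto
  ultimately have "polar_arc W \<in> null_sets lborel"
    using polar_arc_borel by (intro null_sets_subset[OF null_sets_inner_cis_eq_0]) auto
  then show ?thesis
    by (rule measure_eq_0_null_sets)
qed

lemma measure_polar_arc_eq_external_angle:
  assumes W: "finite W" "W \<noteq> {}" and hull: "0 \<notin> convex hull W"
  shows "measure lborel (polar_arc W) = external_angle (convex hull (insert 0 W)) 0"
proof -
  have "closed (convex hull W)"
    using W by (intro compact_imp_closed compact_convex_hull finite_imp_compact)
  then obtain c b where c: "c \<noteq> 0" "0 < b" "\<forall>x\<in>convex hull W. b < c \<bullet> x"
    using separating_hyperplane_closed_0[OF convex_convex_hull _ hull] by blast
  define W' where "W' = (*) (cnj c) ` W"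
  have pos: "0 < Re w'" if w': "w' \<in> W'" for w'
  proof -
    obtain w where "w \<in> W" "w' = cnj c * w"
      using w' unfolding W'_def by blast
    then show ?thesis
      using c(2) c(3) hull_inc[of w W] by (force simp: inner_complex_def)
  qed
  have linear: "linear ((*) (cnj c))"
    by (rule bounded_linear.linear[OF bounded_linear_mult_right])
  have hull_W': "convex hull (insert 0 W') = (*) (cnj c) ` (convex hull (insert 0 W))"
    by (simp add: W'_def convex_hull_linear_image[OF linear])
  have "measure lborel (polar_arc W) = measure lborel (polar_arc W')"
    unfolding W'_def using c(1) by (simp add: measure_polar_arc_mult)
  also have "\<dots> = pi - (Max (Arg ` W') - Min (Arg ` W'))"
    using W pos by (intro measure_polar_arc_right_half_plane) (auto simp: W'_def)
  also have "\<dots> = external_angle (convex hull (insert 0 W')) 0"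
    using W pos by (simp add: external_angle_def interior_angle_hull_right_half_plane W'_def)
  also have "\<dots> = external_angle (convex hull (insert 0 W)) 0"
    using c(1) interior_angle_affine_image[of "cnj c" 0 "convex hull (insert 0 W)" 0]
    by (simp add: hull_W' external_angle_def)
  finally show ?thesis .
qed

lemma measure_polar_arc_translate:
  assumes S: "finite S" "S \<noteq> {}" "v \<notin> S"
  shows "measure lborel (polar_arc ((\<lambda>z. z - v) ` S))
    = (if v \<in> convex hull S then 0 else external_angle (convex hull (insert v S)) v)"
proof -
  have hull_shift: "convex hull ((\<lambda>z. z - v) ` X) = (\<lambda>z. z - v) ` (convex hull X)" for X
    using convex_hull_translation[of "- v" X] by simp
  show ?thesis
  proof (cases "v \<in> convex hull S")
    case True
    have "measure lborel (polar_arc ((\<lambda>z. z - v) ` S)) = 0"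
      using S True by (intro measure_polar_arc_zero_in_hull) (auto simp: hull_shift)
    then show ?thesis
      using True by simp
  next
    case False
    have "measure lborel (polar_arc ((\<lambda>z. z - v) ` S))
        = external_angle (convex hull (insert 0 ((\<lambda>z. z - v) ` S))) 0"
      using S False by (intro measure_polar_arc_eq_external_angle) (auto simp: hull_shift)
    also have "convex hull (insert 0 ((\<lambda>z. z - v) ` S)) = (\<lambda>z. z - v) ` (convex hull (insert v S))"
      using hull_shift[of "insert v S"] by simp
    also have "external_angle \<dots> 0 = external_angle (convex hull (insert v S)) v"
      using interior_angle_affine_image[of 1 "- v" "convex hull (insert v S)" v]
      by (simp add: external_angle_def)
    finally show ?thesis
      using False by simp
  qed
qed

lemma measure_polar_arc_eq_tau:
  assumes inj: "inj_on p {1..n}" and i: "i \<in> {1..n}"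
  shows "measure lborel (polar_arc ((\<lambda>j. p j - p i) ` {1..<i})) = tau p i"
proof (cases "i = 1")
  case True
  have "polar_arc {} = {0..<2*pi}"
    by (auto simp: polar_arc_def polar_cone_def)
  then show ?thesis
    using True by (simp add: tau_def)
next
  case False
  have S: "finite (p ` {1..<i})" "p ` {1..<i} \<noteq> {}" "p i \<notin> p ` {1..<i}"
    using False i by (auto dest: inj_onD[OF inj])
  have "{1..i} = insert i {1..<i}"
    using i by auto
  then have "p ` {1..i} = insert (p i) (p ` {1..<i})"
    by simp
  then show ?thesis
    using measure_polar_arc_translate[OF S] False by (simp add: tau_def image_image)
qed

lemma boundary_point_notin_unit_disk_iff:
  assumes "0 < \<epsilon>"
  shows "\<epsilon> *\<^sub>R p + cis t \<notin> unit_disk (\<epsilon> *\<^sub>R q)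
    \<longleftrightarrow> (q - p) \<bullet> cis t < \<epsilon> * ((norm (q - p))\<^sup>2 / 2)"
proof -
  define w where "w = q - p"
  have "(norm (cis t - \<epsilon> *\<^sub>R w))\<^sup>2 = (cis t - \<epsilon> *\<^sub>R w) \<bullet> (cis t - \<epsilon> *\<^sub>R w)"
    by (rule power2_norm_eq_inner)
  also have "\<dots> = cis t \<bullet> cis t - 2 * \<epsilon> * (w \<bullet> cis t) + \<epsilon>\<^sup>2 * (w \<bullet> w)"
    by (simp add: inner_diff_left inner_diff_right inner_commute[of "cis t" w]
        power2_eq_square algebra_simps)
  also have "\<dots> = 1 - 2 * \<epsilon> * (w \<bullet> cis t) + \<epsilon>\<^sup>2 * (norm w)\<^sup>2"
    by (simp flip: power2_norm_eq_inner)
  finally have norm_square: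
    "(norm (cis t - \<epsilon> *\<^sub>R w))\<^sup>2 = 1 - 2 * \<epsilon> * (w \<bullet> cis t) + \<epsilon>\<^sup>2 * (norm w)\<^sup>2" .
  have diff: "\<epsilon> *\<^sub>R q - (\<epsilon> *\<^sub>R p + cis t) = - (cis t - \<epsilon> *\<^sub>R w)"
    by (simp add: w_def algebra_simps)
  have "\<epsilon> *\<^sub>R p + cis t \<notin> unit_disk (\<epsilon> *\<^sub>R q) \<longleftrightarrow> 1 < norm (cis t - \<epsilon> *\<^sub>R w)"
    unfolding unit_disk_def mem_cball dist_norm diff norm_minus_cancel by auto
  also have "\<dots> \<longleftrightarrow> 1 < (norm (cis t - \<epsilon> *\<^sub>R w))\<^sup>2"
    using norm_ge_zero[of "cis t - \<epsilon> *\<^sub>R w"]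
    by (metis one_less_power one_power2 power2_less_imp_less zero_less_numeral)
  also have "\<dots> \<longleftrightarrow> (2 * \<epsilon>) * (w \<bullet> cis t) < (2 * \<epsilon>) * (\<epsilon> * ((norm w)\<^sup>2 / 2))"
    unfolding norm_square by (simp add: power2_eq_square mult.assoc)
  also have "\<dots> \<longleftrightarrow> w \<bullet> cis t < \<epsilon> * ((norm w)\<^sup>2 / 2)"
    using assms by (intro mult_less_cancel_left_pos) simp
  finally show ?thesis
    by (simp add: w_def)
qed

lemma vis_inv_into:
  assumes "inj_on q I"
  shows "vis (q ` I) (inv_into I q)
    = (\<Sum>i\<in>I. measure lborel {t\<in>{0..<2*pi}. \<forall>j\<in>I. j < i \<longrightarrow> q i + cis t \<notin> unit_disk (q j)})"
proof -
  have "visible_param (q ` I) (inv_into I q) (q i)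
      = {t\<in>{0..<2*pi}. \<forall>j\<in>I. j < i \<longrightarrow> q i + cis t \<notin> unit_disk (q j)}" if "i \<in> I" for i
    using assms that by (auto simp: visible_param_def inv_into_f_f)
  moreover have "vis (q ` I) (inv_into I q)
      = (\<Sum>i\<in>I. measure lborel (visible_param (q ` I) (inv_into I q) (q i)))"
    unfolding vis_def using sum.reindex[OF assms] by (simp add: comp_def)
  ultimately show ?thesis
    by simp
qed

lemma vis_scale_set:
  assumes inj: "inj_on p {1..n}" and \<epsilon>: "0 < \<epsilon>"
  shows "vis (scale_set \<epsilon> (p ` {1..n})) (inv_into {1..n} (\<lambda>i. \<epsilon> *\<^sub>R p i))
    = (\<Sum>i=1..n. measure lborel
        (relaxed_polar_arc \<epsilon> (\<lambda>w. (norm w)\<^sup>2 / 2) ((\<lambda>j. p j - p i) ` {1..<i})))"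
proof -
  have inj_scaled: "inj_on (\<lambda>i. \<epsilon> *\<^sub>R p i) {1..n}"
  proof (rule inj_onI)
    fix x y assume "x \<in> {1..n}" "y \<in> {1..n}" "\<epsilon> *\<^sub>R p x = \<epsilon> *\<^sub>R p y"
    then show "x = y"
      using \<epsilon> inj_onD[OF inj, of x y] by simp
  qed
  have "scale_set \<epsilon> (p ` {1..n}) = (\<lambda>i. \<epsilon> *\<^sub>R p i) ` {1..n}"
    by (simp add: scale_set_def image_image)
  then have "vis (scale_set \<epsilon> (p ` {1..n})) (inv_into {1..n} (\<lambda>i. \<epsilon> *\<^sub>R p i))
      = (\<Sum>i\<in>{1..n}. measure lborel {t\<in>{0..<2*pi}.
          \<forall>j\<in>{1..n}. j < i \<longrightarrow> \<epsilon> *\<^sub>R p i + cis t \<notin> unit_disk (\<epsilon> *\<^sub>R p j)})"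
    by (simp only: vis_inv_into[OF inj_scaled])
  also have "\<dots> = (\<Sum>i=1..n. measure lborel
      (relaxed_polar_arc \<epsilon> (\<lambda>w. (norm w)\<^sup>2 / 2) ((\<lambda>j. p j - p i) ` {1..<i})))"
  proof (rule sum.cong[OF refl])
    fix i assume "i \<in> {1..n}"
    then have "(\<forall>j\<in>{1..n}. j < i \<longrightarrow> \<epsilon> *\<^sub>R p i + cis t \<notin> unit_disk (\<epsilon> *\<^sub>R p j))
        \<longleftrightarrow> (\<forall>w\<in>(\<lambda>j. p j - p i) ` {1..<i}. w \<bullet> cis t < \<epsilon> * ((norm w)\<^sup>2 / 2))" for t
      by (auto simp: boundary_point_notin_unit_disk_iff[OF \<epsilon>])
    then show "measure lborel {t\<in>{0..<2*pi}.
          \<forall>j\<in>{1..n}. j < i \<longrightarrow> \<epsilon> *\<^sub>R p i + cis t \<notin> unit_disk (\<epsilon> *\<^sub>R p j)}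
        = measure lborel (relaxed_polar_arc \<epsilon> (\<lambda>w. (norm w)\<^sup>2 / 2) ((\<lambda>j. p j - p i) ` {1..<i}))"
      by (simp add: relaxed_polar_arc_def)
  qed
  finally show ?thesis .
qed

lemma tendsto_measure_polar_arc_relaxed:
  assumes W: "finite W" and c: "\<And>w. w \<in> W \<Longrightarrow> 0 < c w"
  shows "((\<lambda>\<epsilon>. measure lborel (relaxed_polar_arc \<epsilon> c W)) \<longlongrightarrow> measure lborel (polar_arc W))
    (at_right 0)"
proof (rule tendsto_at_right_sequentially[of 0 1])
  fix S :: "nat \<Rightarrow> real"
  assume S: "\<And>n. 0 < S n" "decseq S" "S \<longlonglongrightarrow> 0"
  define A where "A n = relaxed_polar_arc (S n) c W" for n
  have "range A \<subseteq> sets lborel"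
    using W by (auto simp: A_def relaxed_polar_arc_def)
  moreover have "decseq A"
  proof (rule decseq_SucI)
    fix n
    have "S (Suc n) * c w \<le> S n * c w" if "w \<in> W" for w
      using S(2) c[OF that] by (simp add: decseq_Suc_iff)
    then show "A (Suc n) \<subseteq> A n"
      by (force simp: A_def relaxed_polar_arc_def)
  qed
  moreover have "emeasure lborel (A n) \<noteq> \<infinity>" for n
    by (rule less_imp_neq[OF emeasure_bounded_finite])
       (auto simp: A_def relaxed_polar_arc_def intro: bounded_subset[of "{0..2*pi}"])
  ultimately have "(\<lambda>n. measure lborel (A n)) \<longlonglongrightarrow> measure lborel (\<Inter>n. A n)"
    by (rule Lim_measure_decseq)
  moreover have "(\<Inter>n. A n) = polar_arc W"
  proof (intro equalityI subsetI)
    fix t assume t: "t \<in> (\<Inter>n. A n)"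
    have "w \<bullet> cis t \<le> 0" if "w \<in> W" for w
    proof (rule LIMSEQ_le_const)
      show "(\<lambda>n. S n * c w) \<longlonglongrightarrow> 0"
        using tendsto_mult[OF S(3) tendsto_const[of "c w"]] by simp
      show "\<exists>N. \<forall>n\<ge>N. w \<bullet> cis t \<le> S n * c w"
        using t that by (auto simp: A_def relaxed_polar_arc_def less_imp_le)
    qed
    then show "t \<in> polar_arc W"
      using t by (auto simp: A_def relaxed_polar_arc_def polar_arc_def polar_cone_def)
  next
    fix t assume t: "t \<in> polar_arc W"
    have "w \<bullet> cis t < S n * c w" if "w \<in> W" for w n
    proof -
      have "w \<bullet> cis t \<le> 0"
        using t that by (simp add: polar_arc_def polar_cone_def)
      moreover have "0 < S n * c w"
        using S(1) c[OF that] by simp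
      ultimately show ?thesis
        by linarith
    qed
    then show "t \<in> (\<Inter>n. A n)"
      using t by (simp add: A_def relaxed_polar_arc_def polar_arc_def)
  qed
  ultimately show "(\<lambda>n. measure lborel (relaxed_polar_arc (S n) c W))
      \<longlonglongrightarrow> measure lborel (polar_arc W)"
    by (simp add: A_def)
qed simp

theorem lemma7:
  fixes p :: "nat \<Rightarrow> complex" and n :: nat
  assumes "inj_on p {1..n}"
  shows "((\<lambda>\<epsilon>. vis (scale_set \<epsilon> (p ` {1..n}))
                    (\<lambda>x. inv_into {1..n} (\<lambda>i. \<epsilon> *\<^sub>R p i) x))
          \<longlongrightarrow> (\<Sum>i=1..n. tau p i)) (at_right 0)"
proof -
  define W where "W i = (\<lambda>j. p j - p i) ` {1..<i}" for i
  define c :: "complex \<Rightarrow> real" where "c = (\<lambda>w. (norm w)\<^sup>2 / 2)"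
  have c_pos: "0 < c w" if i: "i \<in> {1..n}" and w: "w \<in> W i" for i w
  proof -
    obtain j where "j \<in> {1..<i}" "w = p j - p i"
      using w by (auto simp: W_def)
    then show ?thesis
      using i inj_onD[OF assms, of j i] by (auto simp: c_def)
  qed
  have lim: "((\<lambda>\<epsilon>. \<Sum>i=1..n. measure lborel (relaxed_polar_arc \<epsilon> c (W i)))
      \<longlongrightarrow> (\<Sum>i=1..n. measure lborel (polar_arc (W i)))) (at_right 0)"
    using c_pos by (intro tendsto_sum tendsto_measure_polar_arc_relaxed) (auto simp: W_def)
  have eq: "\<forall>\<^sub>F \<epsilon> in at_right 0. (\<Sum>i=1..n. measure lborel (relaxed_polar_arc \<epsilon> c (W i)))
      = vis (scale_set \<epsilon> (p ` {1..n})) (\<lambda>x. inv_into {1..n} (\<lambda>i. \<epsilon> *\<^sub>R p i) x)"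
    using eventually_at_right_less[of 0]
    by eventually_elim (simp add: vis_scale_set[OF assms] W_def c_def del: One_nat_def)
  have sum_eq: "(\<Sum>i=1..n. measure lborel (polar_arc (W i))) = (\<Sum>i=1..n. tau p i)"
    using measure_polar_arc_eq_tau[OF assms] by (simp add: W_def)
  show ?thesis
    using Lim_transform_eventually[OF lim eq] unfolding sum_eq .
qed

end
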